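(* Let $f\in\mathcal{F}\{y_0,\ldots,y_n\}$ be a nonzero differentially homogeneous differential polynomial of degree $m$, not lying in $\mathcal{F}$, and let $\mathscr{R}$ be any ranking of $y_0,\ldots,y_n$. Then both the initial and the separant of $f$ with respect to $\mathscr{R}$ are differentially homogeneous.
   Context: $\mathcal{F}$ is an ordinary differential field with derivation $\delta$; $\mathcal{F}\{y_0,\ldots,y_n\}$ is the differential polynomial ring in the differential indeterminates $y_0,\ldots,y_n$; $y_j^{(k)}$ denotes the $k$-th derivative. A differential polynomial $f$ is differentially homogeneous of degree $m$ if, for a new differential indeterminate $t$, $f(ty_0,\ldots,ty_n)=t^m f(y_0,\ldots,y_n)$ in $\mathcal{F}\{t,y_0,\ldots,y_n\}$. For a ranking $\mathscr{R}$ (a total order on all derivatives $y_j^{(k)}$ compatible with differentiation), the leader of $f\notin\mathcal{F}$ is the highest-ranked derivative $y_i^{(o)}$ occurring in $f$; writing $f=I_f\,(y_i^{(o)})^l+\cdots$ as a polynomial in the leader, $I_f$ is the initial and $\partial f/\partial y_i^{(o)}$ is the separant. *)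

theory Defs
  imports "HOL-Library.Poly_Mapping"
begin

text \<open>Derivatives of differential indeterminates: T k is t^(k), Y j k is y_j^(k).\<close>
datatype dvar = T nat | Y nat nat

fun dsucc :: "dvar \<Rightarrow> dvar" where
  "dsucc (T k) = T (Suc k)"
| "dsucc (Y j k) = Y j (Suc k)"

type_synonym 'a dpoly = "(dvar \<Rightarrow>\<^sub>0 nat) \<Rightarrow>\<^sub>0 'a"

definition is_derivation :: "('a::field \<Rightarrow> 'a) \<Rightarrow> bool" where
  "is_derivation \<delta> \<longleftrightarrow> (\<forall>a b. \<delta> (a + b) = \<delta> a + \<delta> b) \<and> (\<forall>a b. \<delta> (a * b) = a * \<delta> b + \<delta> a * b)"

definition dconst :: "'a::comm_ring_1 \<Rightarrow> 'a dpoly" where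
  "dconst c = Poly_Mapping.single 0 c"

definition dX :: "dvar \<Rightarrow> 'a::comm_ring_1 dpoly" where
  "dX v = Poly_Mapping.single (Poly_Mapping.single v 1) 1"

definition dvars :: "'a::comm_ring_1 dpoly \<Rightarrow> dvar set" where
  "dvars p = (\<Union>M\<in>Poly_Mapping.keys p. Poly_Mapping.keys (M :: dvar \<Rightarrow>\<^sub>0 nat))"

definition in_Fy :: "nat \<Rightarrow> 'a::comm_ring_1 dpoly \<Rightarrow> bool" where
  "in_Fy n p \<longleftrightarrow> (\<forall>v\<in>dvars p. \<exists>j k. v = Y j k \<and> j \<le> n)"

text \<open>The derivation of F{t,y_0,...,y_n} extending \<delta>, with y^(k) mapped to y^(k+1).\<close>
definition dshift :: "dvar \<Rightarrow> (dvar \<Rightarrow>\<^sub>0 nat) \<Rightarrow> (dvar \<Rightarrow>\<^sub>0 nat)" where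
  "dshift v M = M - Poly_Mapping.single v 1 + Poly_Mapping.single (dsucc v) 1"

definition dderiv_mono :: "('a::comm_ring_1 \<Rightarrow> 'a) \<Rightarrow> (dvar \<Rightarrow>\<^sub>0 nat) \<Rightarrow> 'a \<Rightarrow> 'a dpoly" where
  "dderiv_mono \<delta> M c = Poly_Mapping.single M (\<delta> c)
      + (\<Sum>v\<in>Poly_Mapping.keys M. Poly_Mapping.single (dshift v M) (of_nat (Poly_Mapping.lookup M v) * c))"

definition dderiv :: "('a::comm_ring_1 \<Rightarrow> 'a) \<Rightarrow> 'a dpoly \<Rightarrow> 'a dpoly" where
  "dderiv \<delta> p = (\<Sum>M\<in>Poly_Mapping.keys p. dderiv_mono \<delta> M (Poly_Mapping.lookup p M))"

definition dsubst :: "(dvar \<Rightarrow> 'a::comm_ring_1 dpoly) \<Rightarrow> 'a dpoly \<Rightarrow> 'a dpoly" where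
  "dsubst \<sigma> p = (\<Sum>M\<in>Poly_Mapping.keys p. dconst (Poly_Mapping.lookup p M) * (\<Prod>v\<in>Poly_Mapping.keys M. \<sigma> v ^ Poly_Mapping.lookup M v))"

text \<open>The substitution y_j \<mapsto> t y_j, i.e. y_j^(k) \<mapsto> \<delta>^k (t y_j).\<close>
fun tsubst :: "('a::comm_ring_1 \<Rightarrow> 'a) \<Rightarrow> dvar \<Rightarrow> 'a dpoly" where
  "tsubst \<delta> (Y j k) = (dderiv \<delta> ^^ k) (dX (T 0) * dX (Y j 0))"
| "tsubst \<delta> (T k) = dX (T k)"

definition diff_homogeneous :: "('a::comm_ring_1 \<Rightarrow> 'a) \<Rightarrow> 'a dpoly \<Rightarrow> nat \<Rightarrow> bool" where
  "diff_homogeneous \<delta> f m \<longleftrightarrow> dsubst (tsubst \<delta>) f = dX (T 0) ^ m * f"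

text \<open>A ranking of y_0..y_n, given as strict order r (r u v means u ranks lower than v).\<close>
definition is_ranking :: "nat \<Rightarrow> (dvar \<Rightarrow> dvar \<Rightarrow> bool) \<Rightarrow> bool" where
  "is_ranking n r \<longleftrightarrow>
    (let D = {Y j k | j k. j \<le> n} in
     (\<forall>u\<in>D. \<not> r u u) \<and>
     (\<forall>u\<in>D. \<forall>v\<in>D. \<forall>w\<in>D. r u v \<longrightarrow> r v w \<longrightarrow> r u w) \<and>
     (\<forall>u\<in>D. \<forall>v\<in>D. u \<noteq> v \<longrightarrow> r u v \<or> r v u) \<and>
     (\<forall>u\<in>D. r u (dsucc u)) \<and>
     (\<forall>u\<in>D. \<forall>v\<in>D. r u v \<longrightarrow> r (dsucc u) (dsucc v)))"

definition leader :: "(dvar \<Rightarrow> dvar \<Rightarrow> bool) \<Rightarrow> 'a::comm_ring_1 dpoly \<Rightarrow> dvar" where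
  "leader r p = (THE u. u \<in> dvars p \<and> (\<forall>v\<in>dvars p. v \<noteq> u \<longrightarrow> r v u))"

definition var_degree :: "dvar \<Rightarrow> 'a::comm_ring_1 dpoly \<Rightarrow> nat" where
  "var_degree u p = Max ((\<lambda>M. Poly_Mapping.lookup M u) ` Poly_Mapping.keys p)"

definition lead_coeff_in :: "dvar \<Rightarrow> 'a::comm_ring_1 dpoly \<Rightarrow> 'a dpoly" where
  "lead_coeff_in u p = (let l = var_degree u p in
     (\<Sum>M\<in>{M\<in>Poly_Mapping.keys p. Poly_Mapping.lookup M u = l}. Poly_Mapping.single (M - Poly_Mapping.single u l) (Poly_Mapping.lookup p M)))"

definition partial_diff :: "dvar \<Rightarrow> 'a::comm_ring_1 dpoly \<Rightarrow> 'a dpoly" where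
  "partial_diff u p = (\<Sum>M\<in>Poly_Mapping.keys p. Poly_Mapping.single (M - Poly_Mapping.single u 1) (of_nat (Poly_Mapping.lookup M u) * Poly_Mapping.lookup p M))"

definition initial :: "(dvar \<Rightarrow> dvar \<Rightarrow> bool) \<Rightarrow> 'a::comm_ring_1 dpoly \<Rightarrow> 'a dpoly" where
  "initial r p = lead_coeff_in (leader r p) p"

definition separant :: "(dvar \<Rightarrow> dvar \<Rightarrow> bool) \<Rightarrow> 'a::comm_ring_1 dpoly \<Rightarrow> 'a dpoly" where
  "separant r p = partial_diff (leader r p) p"

end

theory Submission
  imports Defs
begin

(*
  Let u = y_i^(b) be the leader of f and s the substitution y_j |-> t y_j, so that
  s(y_j^(k)) = delta^k (t y_j) = t y_j^(k) + (terms in lower derivatives of y_j).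
  Because u ranks highest among the variables of f, s maps u to t u + R and every other
  variable of f to a polynomial, where R and these polynomials are free of u. For such a
  substitution d/du (s p) = t s(dp/du), and the coefficient of u^l in s p is t^l times s of
  the coefficient of u^l in p whenever p has degree at most l in u. Applied to s f = t^m f,
  these give t s(S) = t^m S for the separant S and t^l s(I) = t^m I for the initial I;
  as S and I do not involve t, cancelling a power of t shows that both are differentially
  homogeneous.
*)

lemma poly_mapping_eq_sum_single:
  fixes p :: "'b \<Rightarrow>\<^sub>0 'a::comm_monoid_add"
  shows "p = (\<Sum>M\<in>Poly_Mapping.keys p. Poly_Mapping.single M (Poly_Mapping.lookup p M))"
  by (rule poly_mapping_eqI) (simp add: lookup_sum lookup_single when_def in_keys_iff)

lemma poly_mapping_single_induct [case_names zero single_add]: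
  fixes p :: "'b \<Rightarrow>\<^sub>0 'a::comm_monoid_add"
  assumes "P 0" and "\<And>M c q. P q \<Longrightarrow> P (Poly_Mapping.single M c + q)"
  shows "P p"
proof -
  have "P (\<Sum>M\<in>K. Poly_Mapping.single M (Poly_Mapping.lookup p M))" if "finite K" for K
    using that by (induction K rule: finite_induct) (simp_all add: assms)
  then show ?thesis
    by (subst poly_mapping_eq_sum_single) simp
qed

lemma lookup_single_mult:
  fixes q :: "('b::cancel_comm_monoid_add) \<Rightarrow>\<^sub>0 ('a::comm_semiring_1)"
  shows "Poly_Mapping.lookup (Poly_Mapping.single K a * q) (K + N) = a * Poly_Mapping.lookup q N"
proof -
  have "Poly_Mapping.single K a * q
      = (\<Sum>M\<in>Poly_Mapping.keys q. Poly_Mapping.single (K + M) (a * Poly_Mapping.lookup q M))"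
    by (subst poly_mapping_eq_sum_single[of q]) (simp add: sum_distrib_left mult_single)
  then show ?thesis
    by (simp add: lookup_sum lookup_single when_def in_keys_iff)
qed

lemma dX_power: "(dX v :: 'a::comm_ring_1 dpoly) ^ k = Poly_Mapping.single (Poly_Mapping.single v k) 1"
  by (induction k) (auto simp: dX_def mult_single single_add[symmetric] add.commute)

lemma dX_power_mult_cancel:
  fixes P Q :: "'a::comm_ring_1 dpoly"
  assumes "dX v ^ k * P = dX v ^ k * Q"
  shows "P = Q"
proof (rule poly_mapping_eqI)
  fix N
  have "Poly_Mapping.lookup (dX v ^ k * P) (Poly_Mapping.single v k + N)
      = Poly_Mapping.lookup (dX v ^ k * Q) (Poly_Mapping.single v k + N)"
    using assms by simp
  then show "Poly_Mapping.lookup P N = Poly_Mapping.lookup Q N"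
    by (simp add: dX_power lookup_single_mult)
qed

subsection \<open>Variables and degrees\<close>

lemma dvars_add: "dvars (p + q) \<subseteq> dvars p \<union> dvars q"
  unfolding dvars_def using keys_add[of p q] by blast

lemma dvars_mult: "dvars (p * q) \<subseteq> dvars p \<union> dvars q"
proof
  fix v assume "v \<in> dvars (p * q)"
  then obtain M where M: "M \<in> Poly_Mapping.keys (p * q)" "v \<in> Poly_Mapping.keys M"
    by (auto simp: dvars_def)
  then obtain A B where "M = A + B" "A \<in> Poly_Mapping.keys p" "B \<in> Poly_Mapping.keys q"
    using keys_mult[of p q] by blast
  with M(2) show "v \<in> dvars p \<union> dvars q"
    by (auto simp: dvars_def in_keys_iff lookup_add)
qed

lemma dvars_power: "dvars (p ^ k) \<subseteq> dvars p"
proof (induction k)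
  case (Suc k)
  then show ?case using dvars_mult[of p "p ^ k"] by auto
qed (simp add: dvars_def)

lemma dvars_sum: "dvars (\<Sum>i\<in>I. g i) \<subseteq> (\<Union>i\<in>I. dvars (g i))"
  unfolding dvars_def using keys_sum[of g I] by blast

lemma dvars_single: "dvars (Poly_Mapping.single M c) \<subseteq> Poly_Mapping.keys M"
  by (simp add: dvars_def)

lemma dvars_dX [simp]: "dvars (dX v :: 'a::comm_ring_1 dpoly) = {v}"
  by (simp add: dvars_def dX_def)

lemma dvars_dconst [simp]: "dvars (dconst c) = {}"
  by (simp add: dvars_def dconst_def)

lemma dX_power_mult_eq_0_if_free:
  assumes "v \<notin> dvars (dX v ^ Suc c * P)"
  shows "P = 0"
proof (rule ccontr)
  assume "P \<noteq> 0"
  then obtain M where "Poly_Mapping.lookup P M \<noteq> 0"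
    by (metis poly_mapping_eqI lookup_zero)
  then have "Poly_Mapping.single v (Suc c) + M \<in> Poly_Mapping.keys (dX v ^ Suc c * P)"
    by (simp only: dX_power) (simp add: lookup_single_mult in_keys_iff)
  then have "v \<in> dvars (dX v ^ Suc c * P)"
    unfolding dvars_def by (rule UN_I) (simp add: in_keys_iff lookup_add)
  with assms show False ..
qed

lemma dX_power_mult_eq_free_cancel:
  assumes eq: "dX v ^ a * P = dX v ^ b * Q" and "v \<notin> dvars Q"
  shows "\<exists>d. P = dX v ^ d * Q"
proof (cases "a \<le> b")
  case True
  then have "dX v ^ a * P = dX v ^ a * (dX v ^ (b - a) * Q)"
    using eq by (metis le_add_diff_inverse mult.assoc power_add)
  then show ?thesis
    by (blast dest: dX_power_mult_cancel)
next
  case False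
  then obtain c where c: "a = b + Suc c"
    by (metis add_Suc_right less_imp_Suc_add not_le)
  then have "dX v ^ b * (dX v ^ Suc c * P) = dX v ^ b * Q"
    using eq by (simp only: c power_add mult.assoc)
  then have Q: "Q = dX v ^ Suc c * P"
    by (rule dX_power_mult_cancel[symmetric])
  with \<open>v \<notin> dvars Q\<close> have "P = 0"
    by (simp add: dX_power_mult_eq_0_if_free)
  with Q show ?thesis
    by simp
qed

definition var_deg_le :: "dvar \<Rightarrow> nat \<Rightarrow> 'a::comm_ring_1 dpoly \<Rightarrow> bool" where
  "var_deg_le u k p \<longleftrightarrow> (\<forall>M\<in>Poly_Mapping.keys p. Poly_Mapping.lookup M u \<le> k)"

lemma var_deg_le_0_iff: "var_deg_le u 0 p \<longleftrightarrow> u \<notin> dvars p"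
  by (auto simp: var_deg_le_def dvars_def in_keys_iff)

lemma var_deg_le_zero [simp]: "var_deg_le u k 0"
  by (simp add: var_deg_le_def)

lemma var_deg_le_one [simp]: "var_deg_le u k 1"
  by (simp add: var_deg_le_def)

lemma var_deg_le_var_degree: "var_deg_le u (var_degree u p) p"
  unfolding var_deg_le_def var_degree_def by (auto intro: Max_ge)

lemma var_degree_pos:
  assumes "u \<in> dvars p"
  shows "0 < var_degree u p"
proof -
  obtain M where "M \<in> Poly_Mapping.keys p" "u \<in> Poly_Mapping.keys M"
    using assms by (auto simp: dvars_def)
  then have "0 < Poly_Mapping.lookup M u" "Poly_Mapping.lookup M u \<le> var_degree u p"
    using var_deg_le_var_degree[of u p] by (auto simp: var_deg_le_def in_keys_iff)
  then show ?thesis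
    by linarith
qed

lemma var_deg_le_add: "var_deg_le u k p \<Longrightarrow> var_deg_le u k q \<Longrightarrow> var_deg_le u k (p + q)"
  unfolding var_deg_le_def using keys_add[of p q] by blast

lemma var_deg_le_sum:
  "(\<And>i. i \<in> I \<Longrightarrow> var_deg_le u k (g i)) \<Longrightarrow> var_deg_le u k (\<Sum>i\<in>I. g i)"
  by (induction I rule: infinite_finite_induct) (simp_all add: var_deg_le_add)

lemma var_deg_le_mono: "var_deg_le u k p \<Longrightarrow> k \<le> k' \<Longrightarrow> var_deg_le u k' p"
  unfolding var_deg_le_def by fastforce

lemma var_deg_le_mult:
  assumes "var_deg_le u a p" "var_deg_le u b q"
  shows "var_deg_le u (a + b) (p * q)"
  unfolding var_deg_le_def
proof
  fix M assume "M \<in> Poly_Mapping.keys (p * q)"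
  then obtain x y where "M = x + y" "x \<in> Poly_Mapping.keys p" "y \<in> Poly_Mapping.keys q"
    using keys_mult[of p q] by blast
  with assms show "Poly_Mapping.lookup M u \<le> a + b"
    unfolding var_deg_le_def by (simp add: lookup_add add_mono)
qed

lemma var_deg_le_mult_free:
  "var_deg_le u k p \<Longrightarrow> u \<notin> dvars c \<Longrightarrow> var_deg_le u k (c * p)"
  using var_deg_le_mult[of u 0 c k p] by (simp add: var_deg_le_0_iff)

lemma var_deg_le_prod:
  "(\<And>i. i \<in> I \<Longrightarrow> var_deg_le u (e i) (g i)) \<Longrightarrow> var_deg_le u (\<Sum>i\<in>I. e i) (\<Prod>i\<in>I. g i)"
  by (induction I rule: infinite_finite_induct) (simp_all add: var_deg_le_mult)

lemma var_deg_le_power: "var_deg_le u a p \<Longrightarrow> var_deg_le u (a * k) (p ^ k)"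
  by (induction k) (simp_all add: var_deg_le_mult)

lemma var_deg_le_dX_self: "var_deg_le u 1 (dX u :: 'a::comm_ring_1 dpoly)"
  by (simp add: var_deg_le_def dX_def)

subsection \<open>Substitution\<close>

definition subst_monom :: "(dvar \<Rightarrow> 'a::comm_ring_1 dpoly) \<Rightarrow> (dvar \<Rightarrow>\<^sub>0 nat) \<Rightarrow> 'a dpoly" where
  "subst_monom \<sigma> M = (\<Prod>v\<in>Poly_Mapping.keys M. \<sigma> v ^ Poly_Mapping.lookup M v)"

lemma dsubst_eq_sum_subst_monom:
  "dsubst \<sigma> p = (\<Sum>M\<in>Poly_Mapping.keys p. dconst (Poly_Mapping.lookup p M) * subst_monom \<sigma> M)"
  by (simp add: dsubst_def subst_monom_def)

lemma subst_monom_superset: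
  assumes "finite K" "Poly_Mapping.keys M \<subseteq> K"
  shows "subst_monom \<sigma> M = (\<Prod>v\<in>K. \<sigma> v ^ Poly_Mapping.lookup M v)"
  unfolding subst_monom_def
  by (rule prod.mono_neutral_left) (use assms in \<open>auto simp: in_keys_iff\<close>)

lemma subst_monom_add: "subst_monom \<sigma> (M + N) = subst_monom \<sigma> M * subst_monom \<sigma> N"
proof -
  let ?K = "Poly_Mapping.keys M \<union> Poly_Mapping.keys N"
  have "subst_monom \<sigma> (M + N) = (\<Prod>v\<in>?K. \<sigma> v ^ Poly_Mapping.lookup (M + N) v)"
    by (rule subst_monom_superset) (auto dest: subsetD[OF keys_add])
  also have "\<dots> = (\<Prod>v\<in>?K. \<sigma> v ^ Poly_Mapping.lookup M v) * (\<Prod>v\<in>?K. \<sigma> v ^ Poly_Mapping.lookup N v)"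
    by (simp add: lookup_add power_add prod.distrib)
  finally show ?thesis
    by (simp add: subst_monom_superset[symmetric])
qed

lemma dsubst_add: "dsubst \<sigma> (p + q) = dsubst \<sigma> p + dsubst \<sigma> q"
  unfolding dsubst_eq_sum_subst_monom
  by (rule setsum_keys_plus_distrib) (simp_all add: dconst_def single_add distrib_right)

lemma dsubst_single: "dsubst \<sigma> (Poly_Mapping.single M c) = dconst c * subst_monom \<sigma> M"
  by (simp add: dsubst_eq_sum_subst_monom dconst_def)

lemma dsubst_0 [simp]: "dsubst \<sigma> 0 = 0"
  by (simp add: dsubst_def)

lemma dsubst_1 [simp]: "dsubst \<sigma> 1 = 1"
  by (simp add: dsubst_eq_sum_subst_monom subst_monom_def dconst_def)

lemma dconst_mult: "dconst (a * b) = dconst a * dconst b"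
  by (simp add: dconst_def mult_single)

lemma dconst_add: "dconst (a + b) = dconst a + dconst b"
  by (simp add: dconst_def single_add)

lemma dconst_1: "dconst 1 = 1"
  by (simp add: dconst_def)

lemma dconst_of_nat: "dconst (of_nat k) = of_nat k"
  by (simp add: dconst_def)

lemma dsubst_mult: "dsubst \<sigma> (p * q) = dsubst \<sigma> p * dsubst \<sigma> q"
proof (induction p rule: poly_mapping_single_induct)
  case (single_add M c p)
  have "dsubst \<sigma> (Poly_Mapping.single M c * q) = dsubst \<sigma> (Poly_Mapping.single M c) * dsubst \<sigma> q"
    by (induction q rule: poly_mapping_single_induct)
      (simp_all add: distrib_left dsubst_add dsubst_single mult_single subst_monom_add
        dconst_mult ac_simps)
  with single_add show ?case
    by (simp add: distrib_right dsubst_add)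
qed simp

lemma dsubst_sum: "dsubst \<sigma> (\<Sum>i\<in>I. g i) = (\<Sum>i\<in>I. dsubst \<sigma> (g i))"
  by (induction I rule: infinite_finite_induct) (simp_all add: dsubst_add)

lemma dsubst_power: "dsubst \<sigma> (p ^ k) = dsubst \<sigma> p ^ k"
  by (induction k) (simp_all add: dsubst_mult)

lemma dsubst_dX [simp]: "dsubst \<sigma> (dX v) = \<sigma> v"
  by (simp add: dX_def dsubst_single subst_monom_def dconst_def)

lemma var_deg_le_subst_monom:
  assumes "\<And>v. v \<in> Poly_Mapping.keys M \<Longrightarrow> v \<noteq> u \<Longrightarrow> u \<notin> dvars (\<sigma> v)"
    and "var_deg_le u 1 (\<sigma> u)"
  shows "var_deg_le u (Poly_Mapping.lookup M u) (subst_monom \<sigma> M)"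
proof -
  let ?e = "\<lambda>v. if v = u then Poly_Mapping.lookup M v else 0"
  have "var_deg_le u (\<Sum>v\<in>Poly_Mapping.keys M. ?e v) (subst_monom \<sigma> M)"
    unfolding subst_monom_def
  proof (rule var_deg_le_prod)
    fix v assume v: "v \<in> Poly_Mapping.keys M"
    show "var_deg_le u (?e v) (\<sigma> v ^ Poly_Mapping.lookup M v)"
    proof (cases "v = u")
      case True
      then show ?thesis
        using var_deg_le_power[OF assms(2)] by simp
    next
      case False
      then have "var_deg_le u 0 (\<sigma> v)"
        using assms(1) v by (simp add: var_deg_le_0_iff)
      with False show ?thesis
        using var_deg_le_power[of u 0] by simp
    qed
  qed
  then show ?thesis
    by (cases "Poly_Mapping.lookup M u") (simp_all add: in_keys_iff)
qed

lemma var_deg_le_dsubst: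
  assumes "\<And>v. v \<in> dvars p \<Longrightarrow> v \<noteq> u \<Longrightarrow> u \<notin> dvars (\<sigma> v)"
    and "var_deg_le u 1 (\<sigma> u)" and "var_deg_le u k p"
  shows "var_deg_le u k (dsubst \<sigma> p)"
  unfolding dsubst_eq_sum_subst_monom
proof (rule var_deg_le_sum)
  fix M assume M: "M \<in> Poly_Mapping.keys p"
  then have "var_deg_le u (Poly_Mapping.lookup M u) (subst_monom \<sigma> M)"
    using assms(1,2) by (intro var_deg_le_subst_monom) (auto simp: dvars_def)
  moreover have "Poly_Mapping.lookup M u \<le> k"
    using M assms(3) by (simp add: var_deg_le_def)
  ultimately show "var_deg_le u k (dconst (Poly_Mapping.lookup p M) * subst_monom \<sigma> M)"
    by (simp add: var_deg_le_mult_free var_deg_le_mono)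
qed

subsection \<open>Coefficients with respect to one variable\<close>

definition coeff_in :: "dvar \<Rightarrow> nat \<Rightarrow> 'a::comm_ring_1 dpoly \<Rightarrow> 'a dpoly" where
  "coeff_in u l p = (\<Sum>M\<in>{M\<in>Poly_Mapping.keys p. Poly_Mapping.lookup M u = l}.
      Poly_Mapping.single (M - Poly_Mapping.single u l) (Poly_Mapping.lookup p M))"

lemma lead_coeff_in_eq_coeff_in: "lead_coeff_in u p = coeff_in u (var_degree u p) p"
  by (simp add: lead_coeff_in_def coeff_in_def Let_def)

lemma lookup_coeff_in:
  "Poly_Mapping.lookup (coeff_in u l p) N =
     (if Poly_Mapping.lookup N u = 0 then Poly_Mapping.lookup p (N + Poly_Mapping.single u l) else 0)"
proof -
  let ?s = "Poly_Mapping.single u l"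
  have iff: "(Poly_Mapping.lookup M u = l \<and> M - ?s = N) \<longleftrightarrow> (Poly_Mapping.lookup N u = 0 \<and> M = N + ?s)"
    for M
  proof
    assume M: "Poly_Mapping.lookup M u = l \<and> M - ?s = N"
    then have "M = N + ?s"
      by (intro poly_mapping_eqI) (auto simp: lookup_add lookup_minus lookup_single when_def)
    with M show "Poly_Mapping.lookup N u = 0 \<and> M = N + ?s"
      by (simp add: lookup_add)
  qed (auto simp: lookup_add lookup_single)
  have "Poly_Mapping.lookup (coeff_in u l p) N
      = (\<Sum>M\<in>{M \<in> Poly_Mapping.keys p. Poly_Mapping.lookup M u = l}. Poly_Mapping.lookup p M when M - ?s = N)"
    by (simp add: coeff_in_def lookup_sum lookup_single)
  also have "\<dots> = (\<Sum>M\<in>Poly_Mapping.keys p. Poly_Mapping.lookup p M when Poly_Mapping.lookup M u = l \<and> M - ?s = N)"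
    by (simp add: sum.inter_filter[symmetric] when_def)
  also have "\<dots> = (\<Sum>M\<in>Poly_Mapping.keys p. Poly_Mapping.lookup p M when Poly_Mapping.lookup N u = 0 \<and> M = N + ?s)"
    by (simp only: iff)
  finally show ?thesis
    by (cases "Poly_Mapping.lookup N u = 0") (simp_all add: when_def sum.delta in_keys_iff)
qed

lemma coeff_in_add: "coeff_in u l (p + q) = coeff_in u l p + coeff_in u l q"
  by (rule poly_mapping_eqI) (simp add: lookup_coeff_in lookup_add)

lemma coeff_in_eq_0: "var_deg_le u k p \<Longrightarrow> k < l \<Longrightarrow> coeff_in u l p = 0"
  unfolding coeff_in_def var_deg_le_def by (rule sum.neutral) fastforce

lemma coeff_in_dX_power_mult:
  assumes "u \<notin> dvars q"
  shows "coeff_in u l (dX u ^ l * q) = q"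
proof (rule poly_mapping_eqI)
  fix N
  show "Poly_Mapping.lookup (coeff_in u l (dX u ^ l * q)) N = Poly_Mapping.lookup q N"
  proof (cases "Poly_Mapping.lookup N u = 0")
    case True
    then show ?thesis
      by (simp add: lookup_coeff_in dX_power add.commute[of N] lookup_single_mult)
  next
    case False
    have "N \<notin> Poly_Mapping.keys q"
    proof
      assume "N \<in> Poly_Mapping.keys q"
      with False have "u \<in> dvars q"
        by (auto simp: dvars_def in_keys_iff)
      with assms show False ..
    qed
    with False show ?thesis
      by (simp add: lookup_coeff_in in_keys_iff)
  qed
qed

lemma coeff_in_dX_power_mult_add:
  "u \<notin> dvars a \<Longrightarrow> var_deg_le u k b \<Longrightarrow> k < l \<Longrightarrow> coeff_in u l (dX u ^ l * a + b) = a"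
  by (simp add: coeff_in_add coeff_in_dX_power_mult coeff_in_eq_0)

lemma var_not_in_coeff_in: "u \<notin> dvars (coeff_in u l p)"
  by (auto simp: dvars_def in_keys_iff lookup_coeff_in split: if_splits)

lemma dvars_coeff_in: "dvars (coeff_in u l p) \<subseteq> dvars p"
proof
  fix v assume "v \<in> dvars (coeff_in u l p)"
  then obtain N where N: "N \<in> Poly_Mapping.keys (coeff_in u l p)" "v \<in> Poly_Mapping.keys N"
    by (auto simp: dvars_def)
  then have "N + Poly_Mapping.single u l \<in> Poly_Mapping.keys p"
    by (auto simp: in_keys_iff lookup_coeff_in split: if_splits)
  moreover have "v \<in> Poly_Mapping.keys (N + Poly_Mapping.single u l)"
    using N(2) by (simp add: in_keys_iff lookup_add)
  ultimately show "v \<in> dvars p"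
    by (auto simp: dvars_def)
qed

lemma lookup_dX_power_mult_coeff_in:
  "Poly_Mapping.lookup (dX u ^ l * coeff_in u l p) M =
     (if Poly_Mapping.lookup M u = l then Poly_Mapping.lookup p M else 0)"
proof (cases "l \<le> Poly_Mapping.lookup M u")
  case True
  define N where "N = M - Poly_Mapping.single u l"
  have M: "M = Poly_Mapping.single u l + N"
    using True by (intro poly_mapping_eqI) (auto simp: N_def lookup_add lookup_minus lookup_single when_def)
  then show ?thesis
    by (simp add: dX_power lookup_single_mult lookup_coeff_in lookup_add add.commute[of N])
next
  case False
  have "M \<notin> Poly_Mapping.keys (dX u ^ l * coeff_in u l p)"
    using False keys_mult[of "dX u ^ l" "coeff_in u l p"] by (auto simp: dX_power lookup_add)
  with False show ?thesis
    by (simp add: in_keys_iff)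
qed

lemma coeff_in_decomp:
  assumes "var_deg_le u l p" "0 < l"
  obtains g where "p = dX u ^ l * coeff_in u l p + g" "var_deg_le u (l - 1) g" "dvars g \<subseteq> dvars p"
proof
  let ?g = "p - dX u ^ l * coeff_in u l p"
  have lookup_g: "Poly_Mapping.lookup ?g M = (if Poly_Mapping.lookup M u = l then 0 else Poly_Mapping.lookup p M)"
    for M
    by (simp add: lookup_minus lookup_dX_power_mult_coeff_in)
  then have keys_g: "Poly_Mapping.keys ?g \<subseteq> Poly_Mapping.keys p"
    by (auto simp: in_keys_iff split: if_splits)
  show "p = dX u ^ l * coeff_in u l p + ?g"
    by simp
  show "var_deg_le u (l - 1) ?g"
    unfolding var_deg_le_def
  proof
    fix M assume M: "M \<in> Poly_Mapping.keys ?g"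
    then have "Poly_Mapping.lookup M u \<noteq> l"
      by (auto simp: in_keys_iff lookup_g)
    moreover have "Poly_Mapping.lookup M u \<le> l"
      using assms(1) M keys_g by (auto simp: var_deg_le_def)
    ultimately show "Poly_Mapping.lookup M u \<le> l - 1"
      by simp
  qed
  show "dvars ?g \<subseteq> dvars p"
    using keys_g by (auto simp: dvars_def)
qed

subsection \<open>Partial derivatives\<close>

lemma partial_diff_single:
  "partial_diff u (Poly_Mapping.single M c) =
     Poly_Mapping.single (M - Poly_Mapping.single u 1) (of_nat (Poly_Mapping.lookup M u) * c)"
  by (cases "c = 0") (simp_all add: partial_diff_def)

lemma partial_diff_0 [simp]: "partial_diff u 0 = 0"
  by (simp add: partial_diff_def)

lemma partial_diff_add: "partial_diff u (p + q) = partial_diff u p + partial_diff u q"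
  unfolding partial_diff_def
  by (rule setsum_keys_plus_distrib) (simp_all add: single_add distrib_left)

lemma partial_diff_sum: "partial_diff u (\<Sum>i\<in>I. g i) = (\<Sum>i\<in>I. partial_diff u (g i))"
  by (induction I rule: infinite_finite_induct) (simp_all add: partial_diff_add)

lemma partial_diff_free: "u \<notin> dvars p \<Longrightarrow> partial_diff u p = 0"
  unfolding partial_diff_def by (rule sum.neutral) (auto simp: dvars_def in_keys_iff)

lemma dvars_partial_diff: "dvars (partial_diff u p) \<subseteq> dvars p"
proof -
  have "dvars (partial_diff u p) \<subseteq> (\<Union>M\<in>Poly_Mapping.keys p.
      dvars (Poly_Mapping.single (M - Poly_Mapping.single u 1) (of_nat (Poly_Mapping.lookup M u) * Poly_Mapping.lookup p M)))"
    unfolding partial_diff_def by (rule dvars_sum)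
  also have "\<dots> \<subseteq> (\<Union>M\<in>Poly_Mapping.keys p. Poly_Mapping.keys M)"
    by (intro UN_mono order_refl subset_trans[OF dvars_single]) (auto simp: in_keys_iff lookup_minus)
  also have "\<dots> = dvars p"
    by (simp add: dvars_def)
  finally show ?thesis .
qed

lemma partial_diff_single_mult:
  "partial_diff u (Poly_Mapping.single A a * Poly_Mapping.single B b) =
     Poly_Mapping.single A a * partial_diff u (Poly_Mapping.single B b)
     + partial_diff u (Poly_Mapping.single A a) * Poly_Mapping.single B b"
proof -
  let ?s = "Poly_Mapping.single u (1::nat)"
  \<comment> \<open>if u does not occur in a monomial, the truncated difference is irrelevant: its coefficient is 0\<close>
  have shift: "A + (B - ?s) = A + B - ?s" if "0 < Poly_Mapping.lookup B u" for A B
    using that by (intro poly_mapping_eqI) (auto simp: lookup_add lookup_minus lookup_single when_def)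
  have left: "Poly_Mapping.single (A + (B - ?s)) (a * (of_nat (Poly_Mapping.lookup B u) * b))
      = Poly_Mapping.single (A + B - ?s) (of_nat (Poly_Mapping.lookup B u) * (a * b))"
    using shift[of B A] by (cases "Poly_Mapping.lookup B u = 0") (simp_all add: ac_simps)
  have right: "Poly_Mapping.single (A - ?s + B) (of_nat (Poly_Mapping.lookup A u) * a * b)
      = Poly_Mapping.single (A + B - ?s) (of_nat (Poly_Mapping.lookup A u) * (a * b))"
    using shift[of A B] by (cases "Poly_Mapping.lookup A u = 0") (simp_all add: ac_simps)
  have "Poly_Mapping.single A a * partial_diff u (Poly_Mapping.single B b)
      + partial_diff u (Poly_Mapping.single A a) * Poly_Mapping.single B b
      = Poly_Mapping.single (A + (B - ?s)) (a * (of_nat (Poly_Mapping.lookup B u) * b))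
      + Poly_Mapping.single (A - ?s + B) (of_nat (Poly_Mapping.lookup A u) * a * b)"
    by (simp only: mult_single partial_diff_single)
  also have "\<dots> = Poly_Mapping.single (A + B - ?s)
      (of_nat (Poly_Mapping.lookup A u + Poly_Mapping.lookup B u) * (a * b))"
    by (simp only: left right single_add[symmetric]) (simp add: algebra_simps)
  also have "\<dots> = partial_diff u (Poly_Mapping.single A a * Poly_Mapping.single B b)"
    by (simp only: mult_single partial_diff_single lookup_add)
  finally show ?thesis ..
qed

lemma partial_diff_mult: "partial_diff u (p * q) = p * partial_diff u q + partial_diff u p * q"
proof (induction p rule: poly_mapping_single_induct)
  case (single_add M c p)
  have "partial_diff u (Poly_Mapping.single M c * q)
      = Poly_Mapping.single M c * partial_diff u q + partial_diff u (Poly_Mapping.single M c) * q"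
    by (induction q rule: poly_mapping_single_induct)
      (simp_all add: distrib_left distrib_right partial_diff_add partial_diff_single_mult)
  with single_add show ?case
    by (simp add: distrib_left distrib_right partial_diff_add)
qed simp

lemma partial_diff_power:
  "partial_diff u (p ^ Suc k) = of_nat (Suc k) * p ^ k * partial_diff u p"
  by (induction k) (simp_all add: partial_diff_mult algebra_simps)

lemma partial_diff_mult_free: "u \<notin> dvars c \<Longrightarrow> partial_diff u (c * p) = c * partial_diff u p"
  by (simp add: partial_diff_mult partial_diff_free)

lemma partial_diff_dX_self: "partial_diff u (dX u) = 1"
  by (simp add: dX_def partial_diff_single)

subsection \<open>Substitutions affine in one variable\<close>

definition subst_affine_in :: "dvar \<Rightarrow> 'a::comm_ring_1 dpoly \<Rightarrow> (dvar \<Rightarrow> 'a dpoly) \<Rightarrow> dvar set \<Rightarrow> bool" where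
  "subst_affine_in u t \<sigma> V \<longleftrightarrow>
     u \<notin> dvars t \<and> (\<exists>R. u \<notin> dvars R \<and> \<sigma> u = t * dX u + R) \<and> (\<forall>v\<in>V - {u}. u \<notin> dvars (\<sigma> v))"

lemma subst_affine_in_subset:
  "subst_affine_in u t \<sigma> V \<Longrightarrow> W \<subseteq> V \<Longrightarrow> subst_affine_in u t \<sigma> W"
  unfolding subst_affine_in_def by blast

lemma subst_affine_inE:
  assumes "subst_affine_in u t \<sigma> V"
  obtains R where "u \<notin> dvars t" "u \<notin> dvars R" "\<sigma> u = t * dX u + R"
    and "\<And>v. v \<in> V \<Longrightarrow> v \<noteq> u \<Longrightarrow> u \<notin> dvars (\<sigma> v)"
proof -
  from assms have "\<exists>R. u \<notin> dvars R \<and> \<sigma> u = t * dX u + R"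
    by (simp add: subst_affine_in_def)
  then obtain R where "u \<notin> dvars R" "\<sigma> u = t * dX u + R"
    by (elim exE conjE)
  with assms that show ?thesis
    by (simp add: subst_affine_in_def)
qed

lemma var_deg_le_1_subst_affine_in:
  assumes "subst_affine_in u t \<sigma> V"
  shows "var_deg_le u 1 (\<sigma> u)"
proof -
  obtain R where t: "u \<notin> dvars t" and R: "u \<notin> dvars R" "\<sigma> u = t * dX u + R"
    using assms by (rule subst_affine_inE)
  have "var_deg_le u 1 (t * dX u)"
    using var_deg_le_mult_free[OF var_deg_le_dX_self t] .
  moreover have "var_deg_le u 1 R"
    using var_deg_le_mono[of u 0 R 1] R(1) by (simp add: var_deg_le_0_iff)
  ultimately show ?thesis
    unfolding R(2) by (rule var_deg_le_add)
qed

lemma var_deg_le_dsubst_affine: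
  assumes "subst_affine_in u t \<sigma> (dvars p)" "var_deg_le u k p"
  shows "var_deg_le u k (dsubst \<sigma> p)"
proof (rule var_deg_le_dsubst)
  fix v assume "v \<in> dvars p" "v \<noteq> u"
  with assms(1) show "u \<notin> dvars (\<sigma> v)"
    by (simp add: subst_affine_in_def)
next
  show "var_deg_le u 1 (\<sigma> u)"
    using assms(1) by (rule var_deg_le_1_subst_affine_in)
qed (fact assms(2))

lemma subst_monom_split:
  "subst_monom \<sigma> M = \<sigma> u ^ Poly_Mapping.lookup M u * subst_monom \<sigma> (M - Poly_Mapping.single u (Poly_Mapping.lookup M u))"
proof -
  let ?s = "Poly_Mapping.single u (Poly_Mapping.lookup M u)"
  have "M = ?s + (M - ?s)"
    by (rule poly_mapping_eqI) (simp add: lookup_add lookup_minus lookup_single when_def)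
  then have "subst_monom \<sigma> M = subst_monom \<sigma> (?s + (M - ?s))"
    by (rule arg_cong)
  also have "\<dots> = subst_monom \<sigma> ?s * subst_monom \<sigma> (M - ?s)"
    by (rule subst_monom_add)
  also have "subst_monom \<sigma> ?s = \<sigma> u ^ Poly_Mapping.lookup M u"
    by (simp add: subst_monom_def)
  finally show ?thesis .
qed

lemma var_not_in_subst_monom_remove:
  assumes "subst_affine_in u t \<sigma> (Poly_Mapping.keys M)"
  shows "u \<notin> dvars (subst_monom \<sigma> (M - Poly_Mapping.single u (Poly_Mapping.lookup M u)))"
proof -
  let ?M' = "M - Poly_Mapping.single u (Poly_Mapping.lookup M u)"
  have "var_deg_le u (Poly_Mapping.lookup ?M' u) (subst_monom \<sigma> ?M')"
  proof (rule var_deg_le_subst_monom)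
    fix v assume "v \<in> Poly_Mapping.keys ?M'" "v \<noteq> u"
    then have "v \<in> Poly_Mapping.keys M - {u}"
      by (simp add: in_keys_iff lookup_minus)
    with assms show "u \<notin> dvars (\<sigma> v)"
      by (simp add: subst_affine_in_def)
  next
    show "var_deg_le u 1 (\<sigma> u)"
      using assms by (rule var_deg_le_1_subst_affine_in)
  qed
  then show ?thesis
    by (simp add: lookup_minus var_deg_le_0_iff)
qed

lemma partial_diff_dsubst_single:
  assumes "subst_affine_in u t \<sigma> (Poly_Mapping.keys M)"
  shows "partial_diff u (dsubst \<sigma> (Poly_Mapping.single M c)) = t * dsubst \<sigma> (partial_diff u (Poly_Mapping.single M c))"
proof -
  obtain R where t: "u \<notin> dvars t" and R: "u \<notin> dvars R" "\<sigma> u = t * dX u + R"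
    using assms by (rule subst_affine_inE)
  have diff_\<sigma>u: "partial_diff u (\<sigma> u) = t"
    by (simp add: R partial_diff_add partial_diff_mult_free t partial_diff_dX_self partial_diff_free)
  let ?k = "Poly_Mapping.lookup M u"
  let ?Q = "subst_monom \<sigma> (M - Poly_Mapping.single u ?k)"
  have Q: "u \<notin> dvars ?Q"
    using assms by (rule var_not_in_subst_monom_remove)
  have cQ: "u \<notin> dvars (dconst c * ?Q)"
    using Q dvars_mult[of "dconst c" ?Q] by auto
  show ?thesis
  proof (cases ?k)
    case 0
    with cQ have "u \<notin> dvars (dsubst \<sigma> (Poly_Mapping.single M c))"
      by (simp add: dsubst_single)
    with 0 show ?thesis
      by (simp add: partial_diff_single partial_diff_free)
  next
    case (Suc e)
    have "M - Poly_Mapping.single u 1 - Poly_Mapping.single u e = M - Poly_Mapping.single u ?k"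
      by (simp add: diff_diff_add Suc flip: single_add)
    then have "subst_monom \<sigma> (M - Poly_Mapping.single u 1) = \<sigma> u ^ e * ?Q"
      using subst_monom_split[of \<sigma> "M - Poly_Mapping.single u 1" u] Suc by (simp add: lookup_minus)
    then have rhs: "t * dsubst \<sigma> (partial_diff u (Poly_Mapping.single M c))
        = t * (dconst (of_nat (Suc e) * c) * (\<sigma> u ^ e * ?Q))"
      by (simp only: partial_diff_single dsubst_single Suc)
    have "partial_diff u (dsubst \<sigma> (Poly_Mapping.single M c)) = partial_diff u (dconst c * ?Q * \<sigma> u ^ Suc e)"
      by (simp only: dsubst_single subst_monom_split[of \<sigma> M u] Suc ac_simps)
    also have "\<dots> = dconst c * ?Q * (of_nat (Suc e) * \<sigma> u ^ e * t)"
      by (simp only: partial_diff_mult_free[OF cQ] partial_diff_power diff_\<sigma>u)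
    finally show ?thesis
      unfolding rhs by (simp add: dconst_mult dconst_add dconst_1 dconst_of_nat ac_simps)
  qed
qed

lemma partial_diff_dsubst:
  assumes "subst_affine_in u t \<sigma> (dvars p)"
  shows "partial_diff u (dsubst \<sigma> p) = t * dsubst \<sigma> (partial_diff u p)"
proof -
  let ?S = "\<lambda>M. Poly_Mapping.single M (Poly_Mapping.lookup p M)"
  have "partial_diff u (dsubst \<sigma> p) = (\<Sum>M\<in>Poly_Mapping.keys p. partial_diff u (dsubst \<sigma> (?S M)))"
    by (subst poly_mapping_eq_sum_single) (simp only: dsubst_sum partial_diff_sum)
  also have "\<dots> = (\<Sum>M\<in>Poly_Mapping.keys p. t * dsubst \<sigma> (partial_diff u (?S M)))"
  proof (rule sum.cong)
    fix M assume "M \<in> Poly_Mapping.keys p"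
    then have "Poly_Mapping.keys M \<subseteq> dvars p"
      by (auto simp: dvars_def)
    with assms have "subst_affine_in u t \<sigma> (Poly_Mapping.keys M)"
      by (rule subst_affine_in_subset)
    then show "partial_diff u (dsubst \<sigma> (?S M)) = t * dsubst \<sigma> (partial_diff u (?S M))"
      by (rule partial_diff_dsubst_single)
  qed simp
  also have "\<dots> = t * dsubst \<sigma> (partial_diff u (\<Sum>M\<in>Poly_Mapping.keys p. ?S M))"
    by (simp only: dsubst_sum partial_diff_sum sum_distrib_left)
  also have "\<dots> = t * dsubst \<sigma> (partial_diff u p)"
    by (simp only: poly_mapping_eq_sum_single[symmetric])
  finally show ?thesis .
qed

lemma power_affine_eq_leading_term:
  assumes "u \<notin> dvars t" "u \<notin> dvars R"
  shows "\<exists>E. var_deg_le u l E \<and> (t * dX u + R) ^ Suc l = dX u ^ Suc l * t ^ Suc l + E"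
proof (induction l)
  case 0
  show ?case
    using assms(2) by (intro exI[of _ R]) (simp add: var_deg_le_0_iff ac_simps)
next
  case (Suc l)
  then obtain E where E: "var_deg_le u l E" "(t * dX u + R) ^ Suc l = dX u ^ Suc l * t ^ Suc l + E"
    by blast
  have t: "var_deg_le u 0 t" and R: "var_deg_le u 0 R"
    using assms by (simp_all add: var_deg_le_0_iff)
  define E' where "E' = dX u ^ Suc l * t ^ Suc l * R + E * (t * dX u) + E * R"
  have "(t * dX u + R) ^ Suc (Suc l) = (dX u ^ Suc l * t ^ Suc l + E) * (t * dX u + R)"
    using power_Suc2[of "t * dX u + R" "Suc l"] E(2) by simp
  also have "\<dots> = dX u ^ Suc (Suc l) * t ^ Suc (Suc l) + E'"
    by (simp add: E'_def algebra_simps)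
  finally have "(t * dX u + R) ^ Suc (Suc l) = dX u ^ Suc (Suc l) * t ^ Suc (Suc l) + E'" .
  moreover have "var_deg_le u (Suc l) E'"
  proof -
    have "var_deg_le u (Suc l) (dX u ^ Suc l * t ^ Suc l * R)"
      using var_deg_le_mult[OF var_deg_le_mult[OF var_deg_le_power[OF var_deg_le_dX_self]
            var_deg_le_power[OF t]] R, of "Suc l" "Suc l"]
      by simp
    moreover have "var_deg_le u (Suc l) (E * (t * dX u))"
      using var_deg_le_mult[OF E(1) var_deg_le_mult[OF t var_deg_le_dX_self]] by simp
    moreover have "var_deg_le u (Suc l) (E * R)"
      using var_deg_le_mult[OF E(1) R] by (simp add: var_deg_le_mono)
    ultimately show ?thesis
      unfolding E'_def by (intro var_deg_le_add)
  qed
  ultimately show ?case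
    by blast
qed

lemma coeff_in_dsubst:
  assumes aff: "subst_affine_in u t \<sigma> (dvars p)" and deg: "var_deg_le u l p" and "0 < l"
  shows "coeff_in u l (dsubst \<sigma> p) = t ^ l * dsubst \<sigma> (coeff_in u l p)"
proof -
  define I where "I = coeff_in u l p"
  obtain g where p: "p = dX u ^ l * I + g" and g: "var_deg_le u (l - 1) g" "dvars g \<subseteq> dvars p"
    using coeff_in_decomp[OF deg \<open>0 < l\<close>] unfolding I_def by blast
  obtain R where t: "u \<notin> dvars t" and R: "u \<notin> dvars R" "\<sigma> u = t * dX u + R"
    using aff by (rule subst_affine_inE)
  obtain E where E: "var_deg_le u (l - 1) E" "(t * dX u + R) ^ l = dX u ^ l * t ^ l + E"
    using power_affine_eq_leading_term[OF t R(1), of "l - 1"] \<open>0 < l\<close> by auto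
  have "u \<notin> dvars (dsubst \<sigma> I)"
  proof -
    have "var_deg_le u 0 (dsubst \<sigma> I)"
    proof (rule var_deg_le_dsubst_affine)
      show "subst_affine_in u t \<sigma> (dvars I)"
        unfolding I_def by (rule subst_affine_in_subset[OF aff dvars_coeff_in])
      show "var_deg_le u 0 I"
        unfolding I_def var_deg_le_0_iff by (rule var_not_in_coeff_in)
    qed
    then show ?thesis
      by (simp add: var_deg_le_0_iff)
  qed
  then have top: "u \<notin> dvars (t ^ l * dsubst \<sigma> I)"
    using t dvars_mult[of "t ^ l" "dsubst \<sigma> I"] dvars_power[of t l] by blast
  have "var_deg_le u (l - 1 + 0) (E * dsubst \<sigma> I)"
    using \<open>u \<notin> dvars (dsubst \<sigma> I)\<close> by (intro var_deg_le_mult E(1)) (simp add: var_deg_le_0_iff)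
  moreover have "var_deg_le u (l - 1) (dsubst \<sigma> g)"
    using subst_affine_in_subset[OF aff g(2)] g(1) by (rule var_deg_le_dsubst_affine)
  ultimately have low: "var_deg_le u (l - 1) (E * dsubst \<sigma> I + dsubst \<sigma> g)"
    by (simp add: var_deg_le_add)
  have "dsubst \<sigma> p = dX u ^ l * (t ^ l * dsubst \<sigma> I) + (E * dsubst \<sigma> I + dsubst \<sigma> g)"
    by (subst p) (simp only: dsubst_add dsubst_mult dsubst_power dsubst_dX R(2) E(2),
        simp add: algebra_simps)
  then have "coeff_in u l (dsubst \<sigma> p) = t ^ l * dsubst \<sigma> I"
    using coeff_in_dX_power_mult_add[OF top low] \<open>0 < l\<close> by simp
  then show ?thesis
    by (simp add: I_def)
qed

lemma coeff_in_mult_free: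
  assumes "u \<notin> dvars c" "var_deg_le u l p" "0 < l"
  shows "coeff_in u l (c * p) = c * coeff_in u l p"
proof -
  define I where "I = coeff_in u l p"
  obtain g where p: "p = dX u ^ l * I + g" and g: "var_deg_le u (l - 1) g"
    using coeff_in_decomp[OF assms(2,3)] unfolding I_def by blast
  have "c * p = dX u ^ l * (c * I) + c * g"
    by (subst p) (simp add: algebra_simps)
  moreover have "u \<notin> dvars (c * I)"
    using assms(1) var_not_in_coeff_in[of u l p] dvars_mult[of c I] unfolding I_def by auto
  ultimately show ?thesis
    using var_deg_le_mult_free[OF g assms(1)] \<open>0 < l\<close> unfolding I_def
    by (simp add: coeff_in_dX_power_mult_add)
qed

subsection \<open>The derivation and the substitution y \<mapsto> t y\<close>

lemma derivation_0: "is_derivation \<delta> \<Longrightarrow> \<delta> 0 = 0"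
  unfolding is_derivation_def by (metis add_cancel_right_right)

lemma derivation_1: "is_derivation \<delta> \<Longrightarrow> \<delta> 1 = 0"
  unfolding is_derivation_def by (metis mult_1 add_cancel_right_right mult.comm_neutral)

lemma dderiv_add:
  assumes "is_derivation \<delta>"
  shows "dderiv \<delta> (p + q) = dderiv \<delta> p + dderiv \<delta> q"
  unfolding dderiv_def
proof (rule setsum_keys_plus_distrib)
  show "dderiv_mono \<delta> M 0 = 0" for M
    by (simp add: dderiv_mono_def derivation_0[OF assms])
  show "dderiv_mono \<delta> M (a + b) = dderiv_mono \<delta> M a + dderiv_mono \<delta> M b" for M a b
    using assms unfolding dderiv_mono_def is_derivation_def
    by (simp add: single_add distrib_left sum.distrib algebra_simps)
qed

lemma keys_dshift: "Poly_Mapping.keys (dshift v M) \<subseteq> insert (dsucc v) (Poly_Mapping.keys M)"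
  by (auto simp: dshift_def in_keys_iff lookup_add lookup_minus lookup_single when_def split: if_splits)

lemma dvars_dderiv_mono: "dvars (dderiv_mono \<delta> M c) \<subseteq> Poly_Mapping.keys M \<union> dsucc ` Poly_Mapping.keys M"
proof -
  let ?S = "\<Sum>v\<in>Poly_Mapping.keys M. Poly_Mapping.single (dshift v M) (of_nat (Poly_Mapping.lookup M v) * c)"
  have "dvars ?S \<subseteq> (\<Union>v\<in>Poly_Mapping.keys M. dvars (Poly_Mapping.single (dshift v M) (of_nat (Poly_Mapping.lookup M v) * c)))"
    by (rule dvars_sum)
  also have "\<dots> \<subseteq> (\<Union>v\<in>Poly_Mapping.keys M. insert (dsucc v) (Poly_Mapping.keys M))"
    by (intro UN_mono order_refl subset_trans[OF dvars_single keys_dshift])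
  finally have "dvars ?S \<subseteq> Poly_Mapping.keys M \<union> dsucc ` Poly_Mapping.keys M"
    by blast
  moreover have "dvars (Poly_Mapping.single M (\<delta> c)) \<subseteq> Poly_Mapping.keys M"
    by (rule dvars_single)
  ultimately show ?thesis
    unfolding dderiv_mono_def using dvars_add by blast
qed

lemma dvars_dderiv: "dvars (dderiv \<delta> p) \<subseteq> dvars p \<union> dsucc ` dvars p"
proof -
  have "dvars (dderiv \<delta> p) \<subseteq> (\<Union>M\<in>Poly_Mapping.keys p. dvars (dderiv_mono \<delta> M (Poly_Mapping.lookup p M)))"
    unfolding dderiv_def by (rule dvars_sum)
  also have "\<dots> \<subseteq> (\<Union>M\<in>Poly_Mapping.keys p. Poly_Mapping.keys M \<union> dsucc ` Poly_Mapping.keys M)"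
    by (intro UN_mono order_refl dvars_dderiv_mono)
  also have "\<dots> \<subseteq> dvars p \<union> dsucc ` dvars p"
    unfolding dvars_def by blast
  finally show ?thesis .
qed

lemma dderiv_dX_T0_mult_dX:
  assumes "is_derivation \<delta>"
  shows "dderiv \<delta> (dX (T 0) * dX (Y j k) :: 'a::field dpoly)
    = dX (T 1) * dX (Y j k) + dX (T 0) * dX (Y j (Suc k))"
proof -
  let ?M = "Poly_Mapping.single (T 0) 1 + Poly_Mapping.single (Y j k) (1::nat)"
  have keys: "Poly_Mapping.keys ?M = {T 0, Y j k}"
    by (auto simp: in_keys_iff lookup_add lookup_single when_def split: if_splits)
  have shift_T: "dshift (T 0) ?M = Poly_Mapping.single (T 1) 1 + Poly_Mapping.single (Y j k) 1"
    and shift_Y: "dshift (Y j k) ?M = Poly_Mapping.single (T 0) 1 + Poly_Mapping.single (Y j (Suc k)) 1"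
    by (rule poly_mapping_eqI; simp add: dshift_def lookup_add lookup_minus lookup_single when_def)+
  have "dderiv \<delta> (dX (T 0) * dX (Y j k) :: 'a dpoly) = dderiv_mono \<delta> ?M 1"
    by (simp add: dX_def mult_single dderiv_def)
  also have "\<dots> = Poly_Mapping.single (dshift (T 0) ?M) 1 + Poly_Mapping.single (dshift (Y j k) ?M) 1"
    by (simp only: dderiv_mono_def keys derivation_1[OF assms] single_zero add_0)
      (simp add: lookup_add lookup_single)
  also have "\<dots> = dX (T 1) * dX (Y j k) + dX (T 0) * dX (Y j (Suc k))"
    by (simp only: shift_T shift_Y) (simp add: dX_def mult_single)
  finally show ?thesis .
qed

lemma tsubst_Y_eq:
  assumes "is_derivation \<delta>"
  shows "\<exists>R. tsubst \<delta> (Y j k) = dX (T 0) * dX (Y j k) + R \<and> dvars (R :: 'a::field dpoly) \<subseteq> range T \<union> Y j ` {..<k}"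
proof (induction k)
  case 0
  show ?case
    by (intro exI[of _ 0]) (simp add: dvars_def)
next
  case (Suc k)
  then obtain R where R: "tsubst \<delta> (Y j k) = dX (T 0) * dX (Y j k) + R"
    "dvars (R :: 'a dpoly) \<subseteq> range T \<union> Y j ` {..<k}"
    by blast
  let ?R' = "dX (T 1) * dX (Y j k) + dderiv \<delta> R"
  have "tsubst \<delta> (Y j (Suc k)) = dX (T 0) * dX (Y j (Suc k)) + ?R'"
    using R(1) by (simp add: dderiv_add[OF assms] dderiv_dX_T0_mult_dX[OF assms] ac_simps)
  moreover have "dvars ?R' \<subseteq> range T \<union> Y j ` {..<Suc k}"
  proof -
    have "dvars (dX (T 1) * dX (Y j k) :: 'a dpoly) \<subseteq> range T \<union> Y j ` {..<Suc k}"
      using dvars_mult[of "dX (T 1) :: 'a dpoly" "dX (Y j k)"] by auto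
    moreover have "dvars R \<subseteq> range T \<union> Y j ` {..<Suc k}"
      using R(2) by auto
    moreover have "dsucc ` dvars R \<subseteq> range T \<union> Y j ` {..<Suc k}"
    proof
      fix x assume "x \<in> dsucc ` dvars R"
      then obtain y where y: "y \<in> dvars R" "x = dsucc y"
        by blast
      with R(2) consider a where "y = T a" | c where "y = Y j c" "c < k"
        by blast
      then show "x \<in> range T \<union> Y j ` {..<Suc k}"
        using y(2) by cases auto
    qed
    ultimately have "dvars (dX (T 1) * dX (Y j k) :: 'a dpoly) \<union> dvars (dderiv \<delta> R) \<subseteq> range T \<union> Y j ` {..<Suc k}"
      using subset_trans[OF dvars_dderiv[of \<delta> R]] by (intro Un_least) simp_all
    then show ?thesis
      using dvars_add[of "dX (T 1) * dX (Y j k)" "dderiv \<delta> R"] by (rule subset_trans[rotated])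
  qed
  ultimately show ?case
    by blast
qed

lemma dvars_tsubst_Y:
  assumes "is_derivation \<delta>"
  shows "dvars (tsubst \<delta> (Y j k) :: 'a::field dpoly) \<subseteq> range T \<union> Y j ` {..k}"
proof -
  obtain R where R: "tsubst \<delta> (Y j k) = dX (T 0) * dX (Y j k) + R" "dvars (R :: 'a dpoly) \<subseteq> range T \<union> Y j ` {..<k}"
    using tsubst_Y_eq[OF assms, of j k] by (elim exE conjE)
  have "dvars (dX (T 0) * dX (Y j k) :: 'a dpoly) \<subseteq> range T \<union> Y j ` {..k}"
    using dvars_mult[of "dX (T 0) :: 'a dpoly" "dX (Y j k)"] by auto
  moreover have "dvars R \<subseteq> range T \<union> Y j ` {..k}"
    using R(2) by auto
  ultimately have "dvars (dX (T 0) * dX (Y j k) :: 'a dpoly) \<union> dvars R \<subseteq> range T \<union> Y j ` {..k}"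
    by (rule Un_least)
  with dvars_add show ?thesis
    unfolding R(1) by (rule subset_trans)
qed

subsection \<open>Rankings and leaders\<close>

definition ranked_vars :: "nat \<Rightarrow> dvar set" where
  "ranked_vars n = {Y j k | j k. j \<le> n}"

lemma in_Fy_iff: "in_Fy n p \<longleftrightarrow> dvars p \<subseteq> ranked_vars n"
  by (auto simp: in_Fy_def ranked_vars_def)

lemma Y_in_ranked_vars: "j \<le> n \<Longrightarrow> Y j k \<in> ranked_vars n"
  by (simp add: ranked_vars_def)

context
  fixes n :: nat and r :: "dvar \<Rightarrow> dvar \<Rightarrow> bool"
  assumes r: "is_ranking n r"
begin

lemma ranking_irrefl: "u \<in> ranked_vars n \<Longrightarrow> \<not> r u u"
  using r unfolding is_ranking_def Let_def ranked_vars_def[symmetric] by blast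

lemma ranking_trans:
  "u \<in> ranked_vars n \<Longrightarrow> v \<in> ranked_vars n \<Longrightarrow> w \<in> ranked_vars n \<Longrightarrow> r u v \<Longrightarrow> r v w \<Longrightarrow> r u w"
  using r unfolding is_ranking_def Let_def ranked_vars_def[symmetric] by blast

lemma ranking_total: "u \<in> ranked_vars n \<Longrightarrow> v \<in> ranked_vars n \<Longrightarrow> u \<noteq> v \<Longrightarrow> r u v \<or> r v u"
  using r unfolding is_ranking_def Let_def ranked_vars_def[symmetric] by blast

lemma ranking_dsucc: "u \<in> ranked_vars n \<Longrightarrow> r u (dsucc u)"
  using r unfolding is_ranking_def Let_def ranked_vars_def[symmetric] by blast

lemma ranking_higher_derivative:
  assumes "j \<le> n" "b < k"
  shows "r (Y j b) (Y j k)"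
  using assms(2)
proof (induction k)
  case (Suc k)
  have step: "r (Y j k) (Y j (Suc k))"
    using ranking_dsucc[OF Y_in_ranked_vars[OF assms(1)]] by simp
  show ?case
  proof (cases "b = k")
    case False
    with Suc have "r (Y j b) (Y j k)"
      by simp
    with step show ?thesis
      using ranking_trans Y_in_ranked_vars[OF assms(1)] by blast
  qed (use step in simp)
qed simp

lemma ranking_has_greatest:
  assumes "finite S" "S \<noteq> {}" "S \<subseteq> ranked_vars n"
  shows "\<exists>u\<in>S. \<forall>v\<in>S. v \<noteq> u \<longrightarrow> r v u"
  using assms
proof (induction S rule: finite_ne_induct)
  case (insert x F)
  then obtain m where m: "m \<in> F" "\<forall>v\<in>F. v \<noteq> m \<longrightarrow> r v m"
    by auto
  have x: "x \<in> ranked_vars n" and F: "F \<subseteq> ranked_vars n"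
    using insert.prems by auto
  show ?case
  proof (cases "r m x")
    case True
    have "r v x" if "v \<in> F" for v
      using that m True ranking_trans[of v m x] x F by (cases "v = m") auto
    then show ?thesis
      by auto
  next
    case False
    with insert.hyps m(1) x F have "r x m"
      using ranking_total[of x m] by auto
    with m show ?thesis
      by auto
  qed
qed simp

lemma leader_greatest:
  assumes "dvars p \<noteq> {}" "dvars p \<subseteq> ranked_vars n"
  shows "leader r p \<in> dvars p \<and> (\<forall>v\<in>dvars p. v \<noteq> leader r p \<longrightarrow> r v (leader r p))"
  unfolding leader_def
proof (rule theI')
  obtain u where u: "u \<in> dvars p" "\<forall>v\<in>dvars p. v \<noteq> u \<longrightarrow> r v u"
    using ranking_has_greatest[OF _ assms] by (auto simp: dvars_def)
  show "\<exists>!u. u \<in> dvars p \<and> (\<forall>v\<in>dvars p. v \<noteq> u \<longrightarrow> r v u)"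
  proof (rule ex1I)
    fix u' assume u': "u' \<in> dvars p \<and> (\<forall>v\<in>dvars p. v \<noteq> u' \<longrightarrow> r v u')"
    show "u' = u"
    proof (rule ccontr)
      assume "u' \<noteq> u"
      with u u' have "r u u'" "r u' u"
        by auto
      moreover have "u \<in> ranked_vars n" "u' \<in> ranked_vars n"
        using u u' assms(2) by auto
      ultimately show False
        using ranking_trans[of u u' u] ranking_irrefl[of u] by simp
    qed
  qed (use u in simp)
qed

end

lemma tsubst_affine_in_leader:
  assumes \<delta>: "is_derivation \<delta>" and r: "is_ranking n r" and f: "in_Fy n f" "dvars f \<noteq> {}"
  shows "subst_affine_in (leader r f) (dX (T 0)) (tsubst \<delta> :: dvar \<Rightarrow> 'a::field dpoly) (dvars f)"
proof -
  let ?u = "leader r f"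
  have fD: "dvars f \<subseteq> ranked_vars n"
    using f(1) by (simp add: in_Fy_iff)
  have u: "?u \<in> dvars f" and greatest: "\<And>v. v \<in> dvars f \<Longrightarrow> v \<noteq> ?u \<Longrightarrow> r v ?u"
    using leader_greatest[OF r f(2) fD] by auto
  then obtain i b where ui: "?u = Y i b" "i \<le> n"
    using fD by (auto simp: ranked_vars_def)
  obtain R where R: "tsubst \<delta> (Y i b) = dX (T 0) * dX (Y i b) + R"
    "dvars (R :: 'a dpoly) \<subseteq> range T \<union> Y i ` {..<b}"
    using tsubst_Y_eq[OF \<delta>, of i b] by (elim exE conjE)
  \<comment> \<open>the image of Y j k involves Y j c only for c \<le> k, and Y i k with k > b would outrank the leader\<close>
  have "?u \<notin> dvars (tsubst \<delta> v :: 'a dpoly)" if v: "v \<in> dvars f - {?u}" for v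
  proof
    assume uv: "?u \<in> dvars (tsubst \<delta> v :: 'a dpoly)"
    obtain j k where vj: "v = Y j k" "j \<le> n"
      using v fD by (auto simp: ranked_vars_def)
    with uv ui dvars_tsubst_Y[OF \<delta>, of j k] have "j = i" "b \<le> k"
      by auto
    with v ui vj have "b < k"
      by auto
    then have "r ?u v"
      using ranking_higher_derivative[OF r ui(2)] ui vj \<open>j = i\<close> by simp
    moreover have "r v ?u"
      using greatest v by simp
    ultimately show False
      using ranking_trans[OF r, of ?u v ?u] ranking_irrefl[OF r, of ?u] u v fD by blast
  qed
  moreover have "?u \<notin> dvars R"
    using R(2) ui by auto
  ultimately show ?thesis
    unfolding subst_affine_in_def using R(1) ui by auto
qed

lemma diff_homogeneous_if_scaled_eq:
  assumes "T 0 \<notin> dvars q" and "dX (T 0) ^ a * dsubst (tsubst \<delta>) q = dX (T 0) ^ b * q"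
  shows "\<exists>d. diff_homogeneous \<delta> q d"
  unfolding diff_homogeneous_def by (rule dX_power_mult_eq_free_cancel[OF assms(2,1)])

theorem mainTheorem1:
  fixes \<delta> :: "'a::field \<Rightarrow> 'a" and f :: "'a dpoly" and n m :: nat
    and r :: "dvar \<Rightarrow> dvar \<Rightarrow> bool"
  assumes "is_derivation \<delta>"
    and "in_Fy n f"
    and "f \<noteq> 0"
    and "dvars f \<noteq> {}"
    and "diff_homogeneous \<delta> f m"
    and "is_ranking n r"
  shows "(\<exists>d. diff_homogeneous \<delta> (initial r f) d) \<and> (\<exists>e. diff_homogeneous \<delta> (separant r f) e)"
proof -
  \<comment> \<open>the hypothesis f \<noteq> 0 is implied by dvars f \<noteq> {} and not needed\<close>
  let ?t = "dX (T 0) :: 'a dpoly" and ?u = "leader r f" and ?l = "var_degree (leader r f) f"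
  have aff: "subst_affine_in ?u ?t (tsubst \<delta>) (dvars f)"
    using tsubst_affine_in_leader assms(1,6,2,4) .
  have hom: "dsubst (tsubst \<delta>) f = ?t ^ m * f"
    using assms(5) unfolding diff_homogeneous_def .
  have T0: "T 0 \<notin> dvars f"
    using assms(2) by (auto simp: in_Fy_def)
  have t: "?u \<notin> dvars (?t ^ m)"
    using aff dvars_power[of ?t m] by (auto simp: subst_affine_in_def)
  have l: "0 < ?l"
    using leader_greatest[OF assms(6,4)] assms(2) by (simp add: var_degree_pos in_Fy_iff)
  have "?t ^ ?l * dsubst (tsubst \<delta>) (initial r f) = ?t ^ m * initial r f"
    using coeff_in_dsubst[OF aff var_deg_le_var_degree l] coeff_in_mult_free[OF t var_deg_le_var_degree l]
    by (simp add: hom initial_def lead_coeff_in_eq_coeff_in)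
  moreover have "T 0 \<notin> dvars (initial r f)"
    using T0 dvars_coeff_in by (auto simp: initial_def lead_coeff_in_eq_coeff_in)
  ultimately have initial: "\<exists>d. diff_homogeneous \<delta> (initial r f) d"
    by (rule diff_homogeneous_if_scaled_eq[rotated])
  have "?t ^ 1 * dsubst (tsubst \<delta>) (separant r f) = ?t ^ m * separant r f"
    using partial_diff_dsubst[OF aff] by (simp add: hom partial_diff_mult_free[OF t] separant_def)
  moreover have "T 0 \<notin> dvars (separant r f)"
    using T0 dvars_partial_diff by (auto simp: separant_def)
  ultimately have "\<exists>e. diff_homogeneous \<delta> (separant r f) e"
    by (rule diff_homogeneous_if_scaled_eq[rotated])
  with initial show ?thesis ..
qed

end
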